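(* Let $n\ge1$, $k>0$, and let $F$ be a complex polynomial of degree exactly $n$ having all its zeros in $|z|\le k$. Then for all $\alpha,\beta\in\mathbb C$ with $|\alpha|\le1$, $|\beta|\le1$ and all $R>r\ge k$, $$\min_{|z|=1}\big|B[F\circ\sigma](z)+\Phi_k(R,r,\alpha,\beta)B[F\circ\rho](z)\big|\ge\frac{|\lambda_0+\lambda_1 n^2/2+\lambda_2 n^3(n-1)/8|}{k^n}\,\big|R^n+r^n\Phi_k(R,r,\alpha,\beta)\big|\min_{|z|=k}|F(z)|.$$
   Context: Fix complex numbers $\lambda_0,\lambda_1,\lambda_2$ such that all zeros of $U(z)=\lambda_0+n\lambda_1 z+\frac{n(n-1)}{2}\lambda_2 z^2$ lie in the half-plane $\{z\in\mathbb C:|z|\le|z-n/2|\}$. The operator $B$ (of the class $\mathcal B_n$) sends a complex polynomial $P$ of degree at most $n$ to $B[P](z)=\lambda_0P(z)+\lambda_1\frac{nz}{2}P'(z)+\lambda_2\left(\frac{nz}{2}\right)^2\frac{P''(z)}{2!}$. For a polynomial $P$ and a map $\rho$, $P\circ\rho$ denotes $z\mapsto P(\rho(z))$, and $B[P\circ\rho](z)$ is $B$ applied to the polynomial $P\circ\rho$, evaluated at $z$. Note $|\lambda_0+\lambda_1 n^2/2+\lambda_2 n^3(n-1)/8|=|B[z^n]|$ at $|z|=1$. For $k>0$, $R,r>0$ and $\alpha,\beta\in\mathbb C$: $\Phi_k(R,r,\alpha,\beta)=\beta\left\{\left(\frac{R+k}{k+r}\right)^n-|\alpha|\right\}-\alpha$;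 and $\sigma(z)=Rz$, $\rho(z)=rz$. *)

theory Defs
  imports "HOL-Analysis.Analysis" "HOL-Computational_Algebra.Polynomial"
begin

definition Bop :: "nat \<Rightarrow> complex \<Rightarrow> complex \<Rightarrow> complex \<Rightarrow> complex poly \<Rightarrow> complex \<Rightarrow> complex" where
  "Bop n l0 l1 l2 P z =
     l0 * poly P z
     + l1 * (of_nat n * z / 2) * poly (pderiv P) z
     + l2 * (of_nat n * z / 2)^2 * poly (pderiv (pderiv P)) z / 2"

definition Upoly :: "nat \<Rightarrow> complex \<Rightarrow> complex \<Rightarrow> complex \<Rightarrow> complex \<Rightarrow> complex" where
  "Upoly n l0 l1 l2 z = l0 + of_nat n * l1 * z + of_nat (n * (n - 1)) / 2 * l2 * z^2"

definition Phi :: "nat \<Rightarrow> real \<Rightarrow> real \<Rightarrow> real \<Rightarrow> complex \<Rightarrow> complex \<Rightarrow> complex" where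
  "Phi n k R r \<alpha> \<beta> = \<beta> * (complex_of_real (((R + k) / (k + r))^n - cmod \<alpha>)) - \<alpha>"

end

theory Submission
  imports Defs "HOL-Complex_Analysis.Conformal_Mappings" "HOL-Computational_Algebra.Fundamental_Theorem_Algebra"
begin

text \<open>Factoring \<open>U(z) = (p\<^sub>1 + v\<^sub>1 z)(p\<^sub>2 + v\<^sub>2 z)\<close>, the operator \<open>n(n-1) B\<close> becomes a
  composition of two polar derivatives whose poles, at any point \<open>|w| \<ge> k\<close>, lie outside the
  disc \<open>|z| < k\<close>; by Laguerre's theorem \<open>B[G]\<close> then has all its zeros in that disc whenever
  \<open>G\<close> has. For such a polynomial each linear factor satisfies
  \<open>|Rz - a| > (R + k)/(k + r) |rz - a|\<close> on \<open>|z| = 1\<close>, and together with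
  \<open>|\<Phi>| \<le> ((R + k)/(k + r))\<^sup>n\<close> this shows \<open>B[G](Rz) + \<Phi> B[G](rz) \<noteq> 0\<close>.
  If the claimed bound failed at some \<open>z\<close>, subtracting a suitable \<open>c z\<^sup>n\<close> from \<open>F\<close> would make
  this combination vanish at \<open>z\<close>, while the minimum modulus principle (applied to \<open>F\<close> outside
  \<open>|z| = k\<close>) shows that \<open>c\<close> is too small to move any zero of \<open>F\<close> out of the disc.\<close>

section \<open>Laguerre's theorem on polar derivatives\<close>

lemma norm_convex_combination_sq_le:
  fixes x y :: complex
  assumes "0 \<le> u" "0 \<le> v" "u + v = 1"
  shows "(cmod (u *\<^sub>R x + v *\<^sub>R y))^2 \<le> u * (cmod x)^2 + v * (cmod y)^2"
proof -
  have "u * (cmod x)^2 + v * (cmod y)^2 - (cmod (u *\<^sub>R x + v *\<^sub>R y))^2 = u * v * (cmod (x - y))^2"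
  proof -
    have v: "v = 1 - u" using assms(3) by simp
    show ?thesis unfolding v cmod_power2 by (simp add: power2_eq_square algebra_simps)
  qed
  then show ?thesis using assms by (smt (verit) mult_nonneg_nonneg zero_le_power2)
qed

text \<open>The set below is the image of the disc \<open>|u - w| < k\<close>, which omits \<open>0\<close>, under \<open>u \<mapsto> 1 / u\<close>.\<close>

lemma convex_reciprocal_disc:
  fixes w :: complex
  assumes "0 \<le> k" "k \<le> cmod w"
  shows "convex {y. cmod (w * y - 1) < k * cmod y}"
proof -
  define f where "f y = ((cmod w)^2 - k^2) * (cmod y)^2 - 2 * Re (w * y) + 1" for y
  have region: "cmod (w * y - 1) < k * cmod y \<longleftrightarrow> f y < 0" for y
  proof -
    have "(cmod (w * y - 1))^2 = (cmod w)^2 * (cmod y)^2 - 2 * Re (w * y) + 1"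
      unfolding cmod_power2 by (simp add: power2_eq_square algebra_simps)
    moreover have "cmod (w * y - 1) < k * cmod y \<longleftrightarrow> (cmod (w * y - 1))^2 < (k * cmod y)^2"
      using assms(1) by (metis norm_ge_zero power2_less_imp_less power_strict_mono zero_le_mult_iff pos2)
    moreover have "((cmod w)^2 - k^2) * (cmod y)^2 = (cmod w)^2 * (cmod y)^2 - (k * cmod y)^2"
      by (simp add: power_mult_distrib left_diff_distrib)
    ultimately show ?thesis unfolding f_def by linarith
  qed
  have f_convex: "f (u *\<^sub>R x + v *\<^sub>R y) \<le> u * f x + v * f y"
    if "0 \<le> u" "0 \<le> v" "u + v = 1" for u v x y
  proof -
    have "((cmod w)^2 - k^2) * (cmod (u *\<^sub>R x + v *\<^sub>R y))^2
        \<le> ((cmod w)^2 - k^2) * (u * (cmod x)^2 + v * (cmod y)^2)"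
      using assms by (intro mult_left_mono norm_convex_combination_sq_le that) (simp add: power_mono)
    moreover have "Re (w * (u *\<^sub>R x + v *\<^sub>R y)) = u * Re (w * x) + v * Re (w * y)"
      by (simp add: scaleR_conv_of_real algebra_simps)
    ultimately show ?thesis using that unfolding f_def by (simp add: algebra_simps)
  qed
  show ?thesis
  proof (rule convexI)
    fix x y :: complex and u v :: real
    assume "x \<in> {y. cmod (w * y - 1) < k * cmod y}" "y \<in> {y. cmod (w * y - 1) < k * cmod y}"
      and uv: "0 \<le> u" "0 \<le> v" "u + v = 1"
    then have "f x < 0" "f y < 0" by (simp_all add: region)
    then have "u * f x + v * f y < 0"
      using uv by (smt (verit) mult_nonneg_nonpos mult_pos_neg)
    then show "u *\<^sub>R x + v *\<^sub>R y \<in> {y. cmod (w * y - 1) < k * cmod y}"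
      using f_convex[OF uv, of x y] by (simp add: region)
  qed
qed

lemma Laguerre_sum_bound:
  fixes a :: "nat \<Rightarrow> complex"
  assumes d: "d \<ge> 1" and a: "\<forall>i<d. cmod (a i) < k" and w: "k \<le> cmod w"
  shows "cmod (w * (\<Sum>i<d. 1 / (w - a i)) - of_nat d) < k * cmod (\<Sum>i<d. 1 / (w - a i))"
proof -
  define Y where "Y = (\<Sum>i<d. 1 / (w - a i))"
  let ?C = "{y. cmod (w * y - 1) < k * cmod y}"
  have "cmod (a 0) < k" using a d by simp
  then have k0: "0 \<le> k" using norm_ge_zero[of "a 0"] by linarith
  have "1 / (w - a i) \<in> ?C" if "i < d" for i
  proof -
    have wa: "w - a i \<noteq> 0" using a that w by auto
    then have "w * (1 / (w - a i)) - 1 = a i * (1 / (w - a i))" by (simp add: field_simps)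
    then show ?thesis using a that wa by (simp add: norm_mult norm_divide divide_strict_right_mono)
  qed
  then have "(\<Sum>i<d. (1 / real d) *\<^sub>R (1 / (w - a i))) \<in> ?C"
    using d by (intro convex_sum[OF _ convex_reciprocal_disc[OF k0 w]]) auto
  moreover have "(\<Sum>i<d. (1 / real d) *\<^sub>R (1 / (w - a i))) = Y / of_nat d"
    unfolding Y_def scaleR_conv_of_real by (simp add: sum_divide_distrib mult.commute)
  ultimately have "cmod (w * (Y / of_nat d) - 1) < k * cmod (Y / of_nat d)" by simp
  moreover have "w * (Y / of_nat d) - 1 = (w * Y - of_nat d) / of_nat d" using d by (simp add: field_simps)
  ultimately show ?thesis using d unfolding Y_def by (simp add: norm_divide field_simps)
qed

lemma poly_pderiv_prod_linear:
  fixes a :: "nat \<Rightarrow> complex"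
  assumes "\<forall>i<d. w \<noteq> a i"
  shows "poly (pderiv (\<Prod>i<d. [:- a i, 1:])) w = poly (\<Prod>i<d. [:- a i, 1:]) w * (\<Sum>i<d. 1 / (w - a i))"
proof -
  have "poly (pderiv (\<Prod>i<d. [:- a i, 1:])) w = (\<Sum>j<d. \<Prod>i\<in>{..<d} - {j}. w - a i)"
    by (simp add: pderiv_prod pderiv_pCons poly_sum poly_prod)
  also have "\<dots> = (\<Sum>j<d. (\<Prod>i<d. w - a i) / (w - a j))"
    using assms by (intro sum.cong refl) (simp add: prod_diff1)
  finally show ?thesis by (simp add: poly_prod sum_distrib_left)
qed

lemma coeff_prod_linear_factors:
  fixes a :: "nat \<Rightarrow> complex"
  shows "coeff (\<Prod>i<Suc d. [:- a i, 1:]) d = - (\<Sum>i<Suc d. a i)"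
proof (induction d)
  case (Suc d)
  have degree: "degree (\<Prod>i<m. [:- a i, 1:]) = m" for m
    using degree_prod_sum_eq[of "{..<m}" "\<lambda>i. [:- a i, 1:]"] by simp
  have "coeff (\<Prod>i<Suc d. [:- a i, 1:]) (Suc d) = 1"
    using lead_coeff_prod[of "\<lambda>i. [:- a i, 1:]" "{..<Suc d}"] degree[of "Suc d"] by simp
  moreover have "(\<Prod>i<Suc (Suc d). [:- a i, 1:]) = [:- a (Suc d), 1:] * (\<Prod>i<Suc d. [:- a i, 1:])"
    by (simp add: mult.commute)
  ultimately show ?case using Suc by simp
qed simp

text \<open>\<open>polar_derivative d p q P\<close> is \<open>p\<close> times the polar derivative \<open>d P + (\<zeta> - z) P'\<close> with pole
  \<open>\<zeta> = q / p\<close>; the homogeneous coordinates \<open>(p : q)\<close> admit the pole at infinity \<open>p = 0\<close>.\<close>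

definition polar_derivative :: "nat \<Rightarrow> complex \<Rightarrow> complex \<Rightarrow> complex poly \<Rightarrow> complex poly" where
  "polar_derivative d p q P = smult (of_nat d * p) P + [:q, -p:] * pderiv P"

lemma poly_polar_derivative:
  "poly (polar_derivative d p q P) w = of_nat d * p * poly P w + (q - p * w) * poly (pderiv P) w"
  by (simp add: polar_derivative_def algebra_simps)

lemma poly_pderiv_polar_derivative:
  "poly (pderiv (polar_derivative d p q P)) w =
     of_nat d * p * poly (pderiv P) w + (q - p * w) * poly (pderiv (pderiv P)) w - p * poly (pderiv P) w"
  by (simp add: polar_derivative_def pderiv_add pderiv_smult pderiv_mult pderiv_pCons pderiv_minus algebra_simps)

lemma coeff_polar_derivative:
  "coeff (polar_derivative d p q P) j =
     (of_nat d - of_nat j) * p * coeff P j + q * of_nat (Suc j) * coeff P (Suc j)"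
  by (cases j) (simp_all add: polar_derivative_def coeff_pderiv algebra_simps)

lemma complex_poly_decompose_roots_in_ball:
  fixes P :: "complex poly"
  assumes "\<forall>z. poly P z = 0 \<longrightarrow> cmod z < k"
  obtains root where "P = smult (lead_coeff P) (\<Prod>i<degree P. [:- root i, 1:])"
    and "\<forall>i<degree P. cmod (root i) < k"
proof -
  obtain root where P: "smult (lead_coeff P) (\<Prod>i<degree P. [:- root i, 1:]) = P"
    using complex_poly_decompose' by blast
  have "poly P (root i) = 0" if "i < degree P" for i
    using that by (subst P[symmetric]) (auto simp: poly_prod)
  then show ?thesis using that P assms by metis
qed

lemma polar_derivative_nonzero:
  fixes P :: "complex poly"
  assumes deg: "degree P = d" "d \<ge> 1" and zeros: "\<forall>z. poly P z = 0 \<longrightarrow> cmod z < k"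
    and pole: "k * cmod p \<le> cmod q" "p \<noteq> 0 \<or> q \<noteq> 0" and w: "k \<le> cmod w"
  shows "poly (polar_derivative d p q P) w \<noteq> 0"
proof
  assume E: "poly (polar_derivative d p q P) w = 0"
  obtain root where P: "P = smult (lead_coeff P) (\<Prod>i<d. [:- root i, 1:])"
    and root: "\<forall>i<d. cmod (root i) < k"
    using complex_poly_decompose_roots_in_ball[OF zeros] deg by metis
  define Y where "Y = (\<Sum>i<d. 1 / (w - root i))"
  have Pw: "poly P w \<noteq> 0" using zeros w by force
  have "poly (pderiv P) w = poly P w * Y"
    using poly_pderiv_prod_linear[of d w root] root w unfolding Y_def
    by (subst (1 2) P) (force simp: pderiv_smult)
  then have "poly P w * (of_nat d * p + (q - p * w) * Y) = 0"
    using E unfolding poly_polar_derivative by (simp add: algebra_simps)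
  then have "of_nat d * p + (q - p * w) * Y = 0" using Pw by simp
  then have balance: "p * (w * Y - of_nat d) = q * Y" by (simp add: algebra_simps)
  have bound: "cmod (w * Y - of_nat d) < k * cmod Y"
    unfolding Y_def using Laguerre_sum_bound deg(2) root w by blast
  show False
  proof (cases "p = 0")
    case True
    then show False using balance bound pole(2) deg(2) by simp
  next
    case False
    have "cmod p * cmod (w * Y - of_nat d) < cmod p * (k * cmod Y)"
      using bound False by simp
    also have "\<dots> \<le> cmod q * cmod Y"
      using mult_right_mono[OF pole(1) norm_ge_zero[of Y]] by (simp add: mult_ac)
    finally show False by (metis balance norm_mult order_less_irrefl)
  qed
qed

lemma degree_polar_derivative:
  fixes P :: "complex poly"
  assumes deg: "degree P = d" "d \<ge> 1" and zeros: "\<forall>z. poly P z = 0 \<longrightarrow> cmod z < k"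
    and pole: "k * cmod p \<le> cmod q" "p \<noteq> 0 \<or> q \<noteq> 0"
  shows "degree (polar_derivative d p q P) = d - 1"
proof -
  obtain d' where d': "d = Suc d'" using deg(2) by (cases d) auto
  obtain root where P: "P = smult (lead_coeff P) (\<Prod>i<d. [:- root i, 1:])"
    and root: "\<forall>i<d. cmod (root i) < k"
    using complex_poly_decompose_roots_in_ball[OF zeros] deg by metis
  define c where "c = lead_coeff P"
  define Q where "Q = (\<Prod>i<d. [:- root i, 1:])"
  have coeff_P: "coeff P j = c * coeff Q j" for j
    unfolding Q_def c_def by (metis P coeff_smult)
  have top: "coeff Q (Suc d') = 1"
    using lead_coeff_prod[of "\<lambda>i. [:- root i, 1:]" "{..<d}"]
      degree_prod_sum_eq[of "{..<d}" "\<lambda>i. [:- root i, 1:]"] unfolding Q_def d' by simp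
  have next_top: "coeff Q d' = - (\<Sum>i<d. root i)"
    unfolding Q_def d' by (rule coeff_prod_linear_factors)
  have "coeff (polar_derivative d p q P) d' = c * (q * of_nat d - p * (\<Sum>i<d. root i))"
    unfolding coeff_polar_derivative coeff_P top next_top d' by (simp add: algebra_simps)
  moreover have "q * of_nat d \<noteq> p * (\<Sum>i<d. root i)"
  proof (cases "p = 0")
    case False
    have "cmod (p * (\<Sum>i<d. root i)) \<le> cmod p * (\<Sum>i<d. cmod (root i))"
      by (simp add: norm_mult mult_left_mono norm_sum)
    also have "\<dots> < cmod p * (\<Sum>i<d. k)"
      using False root d' by (intro mult_strict_left_mono sum_strict_mono) auto
    also have "\<dots> \<le> cmod (q * of_nat d)"
      using mult_left_mono[OF pole(1), of "real d"] by (simp add: norm_mult mult_ac)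
    finally show ?thesis by auto
  qed (use pole deg in simp)
  moreover have "c \<noteq> 0" using deg unfolding c_def by auto
  moreover have "coeff (polar_derivative d p q P) j = 0" if "j \<ge> d" for j
    unfolding coeff_polar_derivative using that deg(1) by (auto simp: coeff_eq_0)
  ultimately have "d' \<le> degree (polar_derivative d p q P)" "degree (polar_derivative d p q P) \<le> d'"
    using d' by (auto intro!: le_degree degree_le)
  then show ?thesis using d' by simp
qed

section \<open>The operator \<open>B\<close> as a composition of polar derivatives\<close>

lemma complex_quadratic_factorization:
  fixes A B C :: complex
  obtains p1 v1 p2 v2 where "p1 * p2 = A" "p1 * v2 + p2 * v1 = B" "v1 * v2 = C"
proof (cases "C = 0")
  case True
  show ?thesis by (rule that[of A 1 0 B]) (simp_all add: True)
next
  case False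
  define D where "D = csqrt (B^2 - 4 * A * C)"
  define u1 where "u1 = (- B + D) / (2 * C)"
  define u2 where "u2 = (- B - D) / (2 * C)"
  have sum: "- C * u1 - C * u2 = B" unfolding u1_def u2_def using False by (simp add: field_simps)
  have prod: "C * (u1 * u2) = A"
  proof -
    have "C * (u1 * u2) = (B^2 - D^2) / (4 * C)" unfolding u1_def u2_def using False
      by (simp add: field_simps power2_eq_square)
    also have "\<dots> = A" unfolding D_def using False by (simp add: field_simps)
    finally show ?thesis .
  qed
  have "(- C * u1) * (- u2) = A" using prod by (simp add: algebra_simps)
  moreover have "(- C * u1) * 1 + (- u2) * C = B" using sum by (simp add: algebra_simps)
  ultimately show ?thesis by (rule that[of "- C * u1" "- u2" 1 C]) simp
qed

lemma Upoly_linear_factor_pole: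
  assumes hU: "\<forall>z. Upoly n l0 l1 l2 z = 0 \<longrightarrow> cmod z \<le> cmod (z - of_nat n / 2)"
    and n: "n \<ge> 1" and factor: "\<forall>X. Upoly n l0 l1 l2 X = (p + v * X) * g X"
    and k: "0 < k" "k \<le> cmod w"
  shows "k * cmod p \<le> cmod (w * (p + of_nat n * v / 2))"
    and "p \<noteq> 0 \<or> w * (p + of_nat n * v / 2) \<noteq> 0"
proof -
  have shift: "cmod p \<le> cmod (p + of_nat n * v / 2)"
  proof (cases "v = 0")
    case False
    then have "Upoly n l0 l1 l2 (- p / v) = 0" using factor by simp
    then have "cmod (- p / v) \<le> cmod (- p / v - of_nat n / 2)" using hU by blast
    moreover have "- p / v - of_nat n / 2 = - ((p + of_nat n * v / 2) / v)"
      using False by (simp add: field_simps)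
    ultimately show ?thesis using False
      by (simp only: norm_minus_cancel norm_divide divide_le_cancel zero_less_norm_iff) simp
  qed simp
  have nondegenerate: "p \<noteq> 0 \<or> v \<noteq> 0"
  proof (rule ccontr)
    assume "\<not> (p \<noteq> 0 \<or> v \<noteq> 0)"
    then have "Upoly n l0 l1 l2 (of_nat n) = 0" using factor by simp
    then have "cmod (of_nat n :: complex) \<le> cmod (of_nat n - of_nat n / 2 :: complex)" using hU by blast
    moreover have "(of_nat n - of_nat n / 2 :: complex) = of_real (real n / 2)" by simp
    ultimately show False using n by simp
  qed
  show "k * cmod p \<le> cmod (w * (p + of_nat n * v / 2))"
    using shift k by (simp add: norm_mult mult_mono)
  show "p \<noteq> 0 \<or> w * (p + of_nat n * v / 2) \<noteq> 0"
    using nondegenerate k n by auto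
qed

lemma Bop_one_eq_polar_derivative:
  assumes "degree P \<le> 1"
  shows "Bop 1 l0 l1 l2 P w = poly (polar_derivative 1 l0 (w * (l0 + l1 / 2)) P) w"
proof -
  have "pderiv (pderiv P) = 0" using assms by (simp add: pderiv_eq_0_iff degree_pderiv)
  then show ?thesis unfolding poly_polar_derivative Bop_def by (simp add: algebra_simps)
qed

lemma Bop_eq_polar_derivative_twice:
  assumes n: "n \<ge> 1" and l0: "p1 * p2 = l0" and l1: "p1 * v2 + p2 * v1 = of_nat n * l1"
    and l2: "v1 * v2 = of_nat (n * (n - 1)) / 2 * l2"
  shows "of_nat (n * (n - 1)) * Bop n l0 l1 l2 P w =
     poly (polar_derivative (n - 1) p2 (w * (p2 + of_nat n * v2 / 2))
            (polar_derivative n p1 (w * (p1 + of_nat n * v1 / 2)) P)) w"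
proof -
  have n1: "(of_nat (n - 1) :: complex) = of_nat n - 1" using n by (simp add: of_nat_diff)
  have nn: "(of_nat (n * (n - 1)) :: complex) = of_nat n * (of_nat n - 1)"
    by (simp only: of_nat_mult n1)
  have "of_nat (n * (n - 1)) * Bop n l0 l1 l2 P w =
      of_nat n * (of_nat n - 1) * (p1 * p2) * poly P w
      + (of_nat n - 1) * (p1 * v2 + p2 * v1) * (of_nat n * w / 2) * poly (pderiv P) w
      + v1 * v2 * (of_nat n * w / 2)^2 * poly (pderiv (pderiv P)) w"
    unfolding Bop_def l0 l1 l2 nn by (simp add: field_simps)
  also have "\<dots> = poly (polar_derivative (n - 1) p2 (w * (p2 + of_nat n * v2 / 2))
            (polar_derivative n p1 (w * (p1 + of_nat n * v1 / 2)) P)) w"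
    unfolding poly_polar_derivative poly_pderiv_polar_derivative n1
    by (simp add: field_simps power2_eq_square)
  finally show ?thesis .
qed

lemma Bop_nonzero_outside:
  fixes P :: "complex poly"
  assumes hU: "\<forall>z. Upoly n l0 l1 l2 z = 0 \<longrightarrow> cmod z \<le> cmod (z - of_nat n / 2)"
    and n: "n \<ge> 1" and k: "0 < k" and deg: "degree P = n"
    and zeros: "\<forall>z. poly P z = 0 \<longrightarrow> cmod z < k" and w: "k \<le> cmod w"
  shows "Bop n l0 l1 l2 P w \<noteq> 0"
proof (cases "n = 1")
  case True
  have "\<forall>X. Upoly n l0 l1 l2 X = (l0 + l1 * X) * 1" using True by (simp add: Upoly_def)
  note pole = Upoly_linear_factor_pole[OF hU n this k w]
  have "Bop 1 l0 l1 l2 P w = poly (polar_derivative 1 l0 (w * (l0 + l1 / 2)) P) w"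
    using deg True by (intro Bop_one_eq_polar_derivative) simp
  then show ?thesis using polar_derivative_nonzero[OF deg n zeros pole w] True by simp
next
  case False
  obtain p1 v1 p2 v2 where l0: "p1 * p2 = l0" and l1: "p1 * v2 + p2 * v1 = of_nat n * l1"
    and l2: "v1 * v2 = of_nat (n * (n - 1)) / 2 * l2"
    by (rule complex_quadratic_factorization)
  have "Upoly n l0 l1 l2 X = (p1 + v1 * X) * (p2 + v2 * X)" for X
    unfolding Upoly_def l0[symmetric] l1[symmetric] l2[symmetric]
    by (simp add: algebra_simps power2_eq_square)
  then have factor1: "\<forall>X. Upoly n l0 l1 l2 X = (p1 + v1 * X) * (\<lambda>X. p2 + v2 * X) X"
    and factor2: "\<forall>X. Upoly n l0 l1 l2 X = (p2 + v2 * X) * (\<lambda>X. p1 + v1 * X) X"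
    by (simp_all add: mult.commute)
  define E where "E = polar_derivative n p1 (w * (p1 + of_nat n * v1 / 2)) P"
  note pole1 = Upoly_linear_factor_pole[OF hU n factor1 k w]
  note pole2 = Upoly_linear_factor_pole[OF hU n factor2 k w]
  have E_zeros: "\<forall>z. poly E z = 0 \<longrightarrow> cmod z < k"
    using polar_derivative_nonzero[OF deg n zeros pole1] unfolding E_def by (meson not_le)
  have E_deg: "degree E = n - 1"
    unfolding E_def by (rule degree_polar_derivative[OF deg n zeros pole1])
  have "poly (polar_derivative (n - 1) p2 (w * (p2 + of_nat n * v2 / 2)) E) w \<noteq> 0"
    using False n by (intro polar_derivative_nonzero[OF E_deg _ E_zeros pole2 w]) simp
  then show ?thesis
    using Bop_eq_polar_derivative_twice[OF n l0 l1 l2, of P w] unfolding E_def by auto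
qed

definition Bop_eigenvalue :: "nat \<Rightarrow> complex \<Rightarrow> complex \<Rightarrow> complex \<Rightarrow> complex" where
  "Bop_eigenvalue n l0 l1 l2 = l0 + l1 * of_nat n ^ 2 / 2 + l2 * of_nat n ^ 3 * (of_nat n - 1) / 8"

definition Bop_poly :: "nat \<Rightarrow> complex \<Rightarrow> complex \<Rightarrow> complex \<Rightarrow> complex poly \<Rightarrow> complex poly" where
  "Bop_poly n l0 l1 l2 P = smult l0 P + smult (l1 * of_nat n / 2) (monom 1 1 * pderiv P)
     + smult (l2 * of_nat n ^ 2 / 8) (monom 1 2 * pderiv (pderiv P))"

lemma poly_Bop_poly: "poly (Bop_poly n l0 l1 l2 P) w = Bop n l0 l1 l2 P w"
  by (simp add: Bop_poly_def Bop_def poly_monom power2_eq_square field_simps)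

lemma coeff_Bop_poly:
  "coeff (Bop_poly n l0 l1 l2 P) j =
     (l0 + l1 * of_nat n * of_nat j / 2 + l2 * of_nat n ^ 2 * of_nat j * (of_nat j - 1) / 8) * coeff P j"
proof -
  have c1: "coeff (monom 1 1 * pderiv P) j = of_nat j * coeff P j"
    by (cases j) (simp_all add: coeff_monom_mult coeff_pderiv)
  have c2: "coeff (monom 1 2 * pderiv (pderiv P)) j = of_nat j * (of_nat j - 1) * coeff P j"
  proof (cases "j < 2")
    case True
    then show ?thesis by (auto simp: coeff_monom_mult less_2_cases_iff)
  next
    case False
    then obtain m where "j = Suc (Suc m)" by (metis add_2_eq_Suc le_add_diff_inverse not_less)
    then show ?thesis by (simp add: coeff_monom_mult coeff_pderiv)
  qed
  show ?thesis unfolding Bop_poly_def coeff_add coeff_smult c1 c2 by (simp add: field_simps)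
qed

lemma degree_Bop_poly:
  assumes "degree P = n" "Bop_eigenvalue n l0 l1 l2 \<noteq> 0"
  shows "degree (Bop_poly n l0 l1 l2 P) = n"
proof -
  have "coeff (Bop_poly n l0 l1 l2 P) n = Bop_eigenvalue n l0 l1 l2 * lead_coeff P"
    unfolding coeff_Bop_poly Bop_eigenvalue_def using assms(1)
    by (simp add: power2_eq_square power3_eq_cube field_simps)
  then have "n \<le> degree (Bop_poly n l0 l1 l2 P)"
    using assms by (cases "P = 0") (auto intro: le_degree)
  moreover have "degree (Bop_poly n l0 l1 l2 P) \<le> n"
    using assms(1) by (intro degree_le) (simp add: coeff_Bop_poly coeff_eq_0)
  ultimately show ?thesis by simp
qed

lemma Bop_monom: "Bop n l0 l1 l2 (monom 1 n) w = Bop_eigenvalue n l0 l1 l2 * w ^ n"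
proof -
  have "Bop_poly n l0 l1 l2 (monom 1 n) = smult (Bop_eigenvalue n l0 l1 l2) (monom 1 n)"
    by (rule poly_eqI) (simp add: coeff_Bop_poly coeff_monom Bop_eigenvalue_def
        power2_eq_square power3_eq_cube field_simps)
  then show ?thesis by (metis poly_Bop_poly poly_monom poly_smult mult_1)
qed

lemma Bop_pcompose_dilation: "Bop n l0 l1 l2 (P \<circ>\<^sub>p [:0, c:]) z = Bop n l0 l1 l2 P (c * z)"
proof -
  have d1: "pderiv (P \<circ>\<^sub>p [:0, c:]) = smult c (pderiv P \<circ>\<^sub>p [:0, c:])"
    by (simp add: pderiv_pcompose pderiv_pCons)
  then have d2: "pderiv (pderiv (P \<circ>\<^sub>p [:0, c:])) = smult (c * c) (pderiv (pderiv P) \<circ>\<^sub>p [:0, c:])"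
    by (simp add: pderiv_smult pderiv_pcompose pderiv_pCons)
  have "poly (pderiv (P \<circ>\<^sub>p [:0, c:])) z = c * poly (pderiv P) (c * z)"
    by (simp only: d1) (simp add: poly_pcompose mult.commute)
  moreover have "poly (pderiv (pderiv (P \<circ>\<^sub>p [:0, c:]))) z = c * c * poly (pderiv (pderiv P)) (c * z)"
    by (simp only: d2) (simp add: poly_pcompose mult.commute)
  ultimately show ?thesis unfolding Bop_def by (simp add: poly_pcompose power2_eq_square algebra_simps)
qed

lemma Bop_diff_smult: "Bop n l0 l1 l2 (P - smult c Q) w = Bop n l0 l1 l2 P w - c * Bop n l0 l1 l2 Q w"
  by (simp add: Bop_def pderiv_diff pderiv_smult field_simps)

section \<open>Growth under dilation\<close>

lemma norm_dilation_ratio: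
  fixes a z :: complex and R r k :: real
  assumes a: "cmod a < k" and z: "cmod z = 1" and Rr: "r < R" and rk: "k \<le> r"
  shows "(R + k) / (k + r) * cmod (of_real r * z - a) < cmod (of_real R * z - a)"
proof -
  define s where "s = cmod a"
  define c where "c = Re (z * cnj a)"
  have s: "0 \<le> s" "s < k" using a unfolding s_def by auto
  have c: "\<bar>c\<bar> \<le> s"
    unfolding c_def s_def using abs_Re_le_cmod[of "z * cnj a"] z by (simp add: norm_mult)
  have dist_sq: "(cmod (of_real x * z - a))^2 = x^2 - 2 * x * c + s^2" for x
  proof -
    have "(cmod (of_real x * z - a))^2 = x^2 * ((Re z)^2 + (Im z)^2) - 2 * x * c + ((Re a)^2 + (Im a)^2)"
      unfolding c_def cmod_power2 by (simp add: power2_eq_square algebra_simps)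
    moreover have "(Re z)^2 + (Im z)^2 = 1" using z by (metis cmod_power2 one_power2)
    ultimately show ?thesis unfolding s_def cmod_power2 by simp
  qed
  define A where "A = (R^2 + s^2) * (k + r)^2 - (R + k)^2 * (r^2 + s^2)"
  define B where "B = R * (k + r)^2 - r * (R + k)^2"
  text \<open>The difference below is affine in \<open>c \<in> [-s, s]\<close>; at the endpoints, where \<open>a\<close> and
    \<open>z\<close> are collinear, it factors into positive terms.\<close>
  have "0 < (k + r) * (R - s)" "0 < (R + k) * (r - s)" using Rr rk s by simp_all
  then have "0 < (k + r) * (R - s) + (R + k) * (r - s)" by (rule add_pos_pos)
  with Rr s have "0 < ((R - r) * (k + s)) * ((k + r) * (R - s) + (R + k) * (r - s))"
    by (simp add: zero_less_mult_iff)
  also have "\<dots> = A - 2 * s * B"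
    unfolding A_def B_def by (simp add: algebra_simps power2_eq_square)
  finally have at_s: "A - 2 * s * B > 0" .
  have "0 < (k + r) * (R + s)" "0 \<le> (R + k) * (r + s)" using Rr rk s by simp_all
  then have "0 < (k + r) * (R + s) + (R + k) * (r + s)" by (rule add_pos_nonneg)
  with Rr s have "0 < ((R - r) * (k - s)) * ((k + r) * (R + s) + (R + k) * (r + s))"
    by (simp add: zero_less_mult_iff)
  also have "\<dots> = A + 2 * s * B"
    unfolding A_def B_def by (simp add: algebra_simps power2_eq_square)
  finally have at_minus_s: "A + 2 * s * B > 0" .
  have "A - 2 * c * B > 0"
  proof (cases "B \<ge> 0")
    case True
    then have "c * B \<le> s * B" using c by (intro mult_right_mono) auto
    then show ?thesis using at_s by linarith
  next
    case False
    then have "c * B \<le> (- s) * B" using c by (intro mult_right_mono_neg) auto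
    then show ?thesis using at_minus_s by linarith
  qed
  moreover have "(k + r)^2 * (cmod (of_real R * z - a))^2 - (R + k)^2 * (cmod (of_real r * z - a))^2
      = A - 2 * c * B"
    unfolding dist_sq A_def B_def by (simp add: algebra_simps)
  ultimately have "((R + k) * cmod (of_real r * z - a))^2 < ((k + r) * cmod (of_real R * z - a))^2"
    by (simp add: power_mult_distrib)
  then have "(R + k) * cmod (of_real r * z - a) < (k + r) * cmod (of_real R * z - a)"
    by (rule power2_less_imp_less) (use rk s in simp)
  then show ?thesis using Rr rk s by (simp add: field_simps)
qed

lemma poly_dilation_ratio:
  fixes H :: "complex poly" and R r k :: real
  assumes deg: "degree H = d" "d \<ge> 1" and zeros: "\<forall>z. poly H z = 0 \<longrightarrow> cmod z < k"
    and z: "cmod z = 1" and Rr: "r < R" and rk: "k \<le> r"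
  shows "((R + k) / (k + r))^d * cmod (poly H (of_real r * z)) < cmod (poly H (of_real R * z))"
proof -
  obtain root where H: "H = smult (lead_coeff H) (\<Prod>i<d. [:- root i, 1:])"
    and root: "\<forall>i<d. cmod (root i) < k"
    using complex_poly_decompose_roots_in_ball[OF zeros] deg by metis
  define c where "c = lead_coeff H"
  have H_c: "H = smult c (\<Prod>i<d. [:- root i, 1:])" using H unfolding c_def .
  define \<rho> where "\<rho> = (R + k) / (k + r)"
  have "cmod (root 0) < k" using root deg(2) by simp
  then have k: "0 < k" using norm_ge_zero[of "root 0"] by linarith
  have factor: "\<rho> * cmod (of_real r * z - root i) < cmod (of_real R * z - root i)" if "i < d" for i
    unfolding \<rho>_def using norm_dilation_ratio root that z Rr rk by blast
  have "0 \<le> \<rho>" unfolding \<rho>_def using k rk Rr by simp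
  then have factor_nonneg: "0 \<le> \<rho> * cmod (of_real r * z - root i)" for i by simp
  have "(\<Prod>i<d. \<rho> * cmod (of_real r * z - root i)) < (\<Prod>i<d. cmod (of_real R * z - root i))"
  proof (rule prod_mono_strict[of 0])
    show "0 \<in> {..<d}" "\<rho> * cmod (of_real r * z - root 0) < cmod (of_real R * z - root 0)"
      using deg factor by auto
    show "0 \<le> \<rho> * cmod (of_real r * z - root i) \<and>
        \<rho> * cmod (of_real r * z - root i) \<le> cmod (of_real R * z - root i)" if "i \<in> {..<d}" for i
      using factor[of i] factor_nonneg[of i] that by simp
    show "0 < cmod (of_real R * z - root i)" if "i \<in> {..<d}" for i
      using factor[of i] factor_nonneg[of i] that by (meson le_less_trans lessThan_iff)
  qed simp
  then have "\<rho>^d * (\<Prod>i<d. cmod (of_real r * z - root i)) < (\<Prod>i<d. cmod (of_real R * z - root i))"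
    by (simp add: prod.distrib)
  moreover have "0 < cmod c" using deg unfolding c_def by auto
  ultimately have "\<rho>^d * (cmod c * (\<Prod>i<d. cmod (of_real r * z - root i)))
      < cmod c * (\<Prod>i<d. cmod (of_real R * z - root i))"
    by (simp add: mult.left_commute[of "\<rho>^d"])
  moreover have "cmod (poly H x) = cmod c * (\<Prod>i<d. cmod (x - root i))" for x
    by (simp add: H_c poly_prod norm_mult prod_norm)
  ultimately show ?thesis unfolding \<rho>_def by simp
qed

lemma norm_Phi_le:
  assumes "cmod \<alpha> \<le> 1" "cmod \<beta> \<le> 1" "0 < k" "r < R" "k \<le> r"
  shows "cmod (Phi n k R r \<alpha> \<beta>) \<le> ((R + k) / (k + r)) ^ n"
proof -
  define t where "t = ((R + k) / (k + r)) ^ n"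
  have "1 \<le> t" unfolding t_def using assms by (simp add: one_le_power)
  then have t: "0 \<le> t - cmod \<alpha>" using assms(1) by simp
  have "cmod (Phi n k R r \<alpha> \<beta>) \<le> cmod \<beta> * (t - cmod \<alpha>) + cmod \<alpha>"
    using norm_triangle_ineq4[of "\<beta> * of_real (t - cmod \<alpha>)" \<alpha>]
    unfolding Phi_def t_def[symmetric] norm_mult norm_of_real abs_of_nonneg[OF t] .
  also have "\<dots> \<le> t" using mult_right_mono[OF assms(2) t] by simp
  finally show ?thesis unfolding t_def .
qed

lemma Bop_dilation_combination_nonzero:
  fixes G :: "complex poly" and k R r :: real
  assumes hU: "\<forall>z. Upoly n l0 l1 l2 z = 0 \<longrightarrow> cmod z \<le> cmod (z - of_nat n / 2)"
    and n: "n \<ge> 1" and k: "0 < k" and deg: "degree G = n"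
    and zeros: "\<forall>z. poly G z = 0 \<longrightarrow> cmod z < k"
    and eigen: "Bop_eigenvalue n l0 l1 l2 \<noteq> 0"
    and \<alpha>\<beta>: "cmod \<alpha> \<le> 1" "cmod \<beta> \<le> 1" and Rr: "r < R" and rk: "k \<le> r" and z: "cmod z = 1"
  shows "Bop n l0 l1 l2 G (of_real R * z) + Phi n k R r \<alpha> \<beta> * Bop n l0 l1 l2 G (of_real r * z) \<noteq> 0"
proof -
  define H where "H = Bop_poly n l0 l1 l2 G"
  have "\<forall>z. poly H z = 0 \<longrightarrow> cmod z < k"
    using Bop_nonzero_outside[OF hU n k deg zeros] unfolding H_def poly_Bop_poly by (meson not_le)
  then have "((R + k) / (k + r))^n * cmod (poly H (of_real r * z)) < cmod (poly H (of_real R * z))"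
    using poly_dilation_ratio[OF _ n _ z Rr rk] degree_Bop_poly[OF deg eigen] unfolding H_def by blast
  moreover have "cmod (Phi n k R r \<alpha> \<beta>) * cmod (poly H (of_real r * z))
      \<le> ((R + k) / (k + r))^n * cmod (poly H (of_real r * z))"
    using norm_Phi_le[OF \<alpha>\<beta> k Rr rk] by (intro mult_right_mono) auto
  ultimately have "cmod (Phi n k R r \<alpha> \<beta> * poly H (of_real r * z)) < cmod (poly H (of_real R * z))"
    by (simp add: norm_mult)
  then show ?thesis unfolding H_def poly_Bop_poly
    by (metis add_eq_0_iff norm_minus_cancel order_less_irrefl)
qed

section \<open>Minimum modulus outside a disc\<close>

lemma poly_min_modulus_cball:
  fixes p :: "complex poly"
  assumes nz: "\<forall>w\<in>cball c \<rho>. poly p w \<noteq> 0" and bd: "\<forall>w\<in>sphere c \<rho>. m \<le> cmod (poly p w)"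
    and w: "w \<in> cball c \<rho>"
  shows "m \<le> cmod (poly p w)"
proof (cases "m \<le> 0")
  case False
  have holo: "(\<lambda>w. inverse (poly p w)) holomorphic_on cball c \<rho>"
    using nz by (intro holomorphic_on_inverse poly_holomorphic_on holomorphic_on_id) auto
  have "cmod (inverse (poly p w)) \<le> inverse m"
  proof (rule maximum_modulus_frontier[where f = "\<lambda>w. inverse (poly p w)" and S = "cball c \<rho>"])
    show "(\<lambda>w. inverse (poly p w)) holomorphic_on interior (cball c \<rho>)"
      using holo by (rule holomorphic_on_subset) simp
    show "continuous_on (closure (cball c \<rho>)) (\<lambda>w. inverse (poly p w))"
      using holomorphic_on_imp_continuous_on[OF holo] by simp
    show "cmod (inverse (poly p z)) \<le> inverse m" if "z \<in> frontier (cball c \<rho>)" for z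
      using le_imp_inverse_le[of m "cmod (poly p z)"] bd that False by (simp add: norm_inverse)
  qed (use w in auto)
  then show ?thesis
    using inverse_le_imp_le[of "cmod (poly p w)" m] nz w False by (simp add: norm_inverse)
qed (use norm_ge_zero[of "poly p w"] in linarith)

lemma min_modulus_exterior:
  fixes F :: "complex poly"
  assumes k: "0 < k" and outside: "\<forall>z. k \<le> cmod z \<longrightarrow> poly F z \<noteq> 0"
    and m: "\<forall>z\<in>sphere 0 k. m \<le> cmod (poly F z)"
  shows "m \<le> cmod (lead_coeff F) * k ^ degree F"
    and "k \<le> cmod x \<Longrightarrow> m * cmod x ^ degree F \<le> k ^ degree F * cmod (poly F x)"
proof -
  define n where "n = degree F"
  define P where "P = reflect_poly (F \<circ>\<^sub>p [:0, of_real k:])"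
  have "F \<noteq> 0" using outside[rule_format, of "of_real k"] k by auto
  have degree: "degree (F \<circ>\<^sub>p [:0, of_real k:]) = n" unfolding n_def using k by (simp add: degree_pcompose)
  have P_nz: "poly P w = w ^ n * poly F (of_real k / w)" if "w \<noteq> 0" for w
    unfolding P_def using that degree
    by (simp add: poly_reflect_poly_nz poly_pcompose divide_inverse mult.commute)
  have P_0: "poly P 0 = lead_coeff F * of_real k ^ n"
    unfolding P_def n_def using k by (simp add: lead_coeff_comp)
  text \<open>The inversion \<open>w \<mapsto> k / w\<close> exchanges the exterior of the disc of radius \<open>k\<close> with
    the closed unit disc, so the minimum modulus principle applies to \<open>P\<close>.\<close>
  have P_min: "m \<le> cmod (poly P w)" if "cmod w \<le> 1" for w
  proof (rule poly_min_modulus_cball[where c = 0 and \<rho> = 1])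
    have "poly P w \<noteq> 0" if "cmod w \<le> 1" "w \<noteq> 0" for w
    proof -
      have "k \<le> k / cmod w" using that k by (simp add: le_divide_eq mult_left_le_one_le)
      then show ?thesis using P_nz outside that k by (simp add: norm_divide)
    qed
    moreover have "poly P 0 \<noteq> 0" using P_0 k \<open>F \<noteq> 0\<close> by simp
    ultimately show "\<forall>w\<in>cball 0 1. poly P w \<noteq> 0" by (metis mem_cball_0)
    show "\<forall>w\<in>sphere 0 1. m \<le> cmod (poly P w)"
    proof
      fix w :: complex assume "w \<in> sphere 0 1"
      then have "cmod w = 1" "w \<noteq> 0" by auto
      then have "of_real k / w \<in> sphere 0 k" "cmod (poly P w) = cmod (poly F (of_real k / w))"
        using P_nz k by (auto simp: norm_mult norm_power norm_divide)
      then show "m \<le> cmod (poly P w)" using m by simp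
    qed
  qed (use that in simp)
  from P_min[of 0] show "m \<le> cmod (lead_coeff F) * k ^ degree F"
    using P_0 k unfolding n_def by (simp add: norm_mult norm_power)
  assume x: "k \<le> cmod x"
  then have "x \<noteq> 0" using k by auto
  define w where "w = of_real k / x"
  have "cmod w \<le> 1" "w \<noteq> 0" "of_real k / w = x"
    using x k \<open>x \<noteq> 0\<close> unfolding w_def by (auto simp: norm_divide)
  then have "m \<le> cmod w ^ n * cmod (poly F x)"
    using P_min P_nz by (metis norm_mult norm_power)
  then show "m * cmod x ^ degree F \<le> k ^ degree F * cmod (poly F x)"
    using k \<open>x \<noteq> 0\<close> unfolding w_def n_def by (simp add: norm_divide power_divide field_simps)
qed

lemma perturbation_zeros_in_ball:
  fixes F :: "complex poly"
  assumes k: "0 < k" and deg: "degree F = n" and outside: "\<forall>z. k \<le> cmod z \<longrightarrow> poly F z \<noteq> 0"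
    and m: "\<forall>z\<in>sphere 0 k. m \<le> cmod (poly F z)" and c: "cmod c < m / k ^ n"
  shows "degree (F - smult c (monom 1 n)) = n"
    and "\<forall>z. poly (F - smult c (monom 1 n)) z = 0 \<longrightarrow> cmod z < k"
proof -
  note bounds = min_modulus_exterior[OF k outside m, unfolded deg]
  have "cmod c * k ^ n < m" using c k by (simp add: field_simps)
  then have "cmod c * k ^ n < cmod (lead_coeff F) * k ^ n" using bounds(1) deg by (simp add: mult.commute)
  then have "cmod c < cmod (lead_coeff F)" using k by simp
  then have "coeff (F - smult c (monom 1 n)) n \<noteq> 0" using deg by (auto simp: coeff_monom)
  moreover have "degree (F - smult c (monom 1 n)) \<le> n"
    using deg by (intro degree_diff_le) (auto simp: degree_monom_eq intro: degree_smult_le[THEN order_trans])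
  ultimately show "degree (F - smult c (monom 1 n)) = n" by (simp add: le_antisym le_degree)
  show "\<forall>z. poly (F - smult c (monom 1 n)) z = 0 \<longrightarrow> cmod z < k"
  proof (intro allI impI)
    fix z assume "poly (F - smult c (monom 1 n)) z = 0"
    then have "cmod (poly F z) = cmod c * cmod z ^ n" by (simp add: poly_monom norm_mult norm_power)
    show "cmod z < k"
    proof (rule ccontr)
      assume "\<not> cmod z < k"
      then have "k \<le> cmod z" by simp
      then have "0 < cmod z ^ n" using k by (intro zero_less_power) linarith
      then have "k ^ n * cmod (poly F z) < m * cmod z ^ n"
        using \<open>cmod (poly F z) = _\<close> c k by (simp add: field_simps)
      then show False using bounds(2)[OF \<open>k \<le> cmod z\<close>] by simp
    qed
  qed
qed

lemma Bop_combination_lower_bound: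
  fixes F :: "complex poly" and k R r m :: real
  assumes hU: "\<forall>z. Upoly n l0 l1 l2 z = 0 \<longrightarrow> cmod z \<le> cmod (z - of_nat n / 2)"
    and n: "n \<ge> 1" and k: "0 < k" and deg: "degree F = n"
    and zeros: "\<forall>z. poly F z = 0 \<longrightarrow> cmod z \<le> k"
    and \<alpha>\<beta>: "cmod \<alpha> \<le> 1" "cmod \<beta> \<le> 1" and Rr: "r < R" and rk: "k \<le> r"
    and m: "\<forall>w\<in>sphere 0 k. m \<le> cmod (poly F w)" "0 \<le> m" and z: "cmod z = 1"
  shows "cmod (Bop_eigenvalue n l0 l1 l2) / k ^ n * cmod (of_real (R ^ n) + of_real (r ^ n) * Phi n k R r \<alpha> \<beta>) * m
    \<le> cmod (Bop n l0 l1 l2 F (of_real R * z) + Phi n k R r \<alpha> \<beta> * Bop n l0 l1 l2 F (of_real r * z))"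
    (is "?K \<le> cmod ?T")
proof (rule ccontr)
  define E where "E = Bop_eigenvalue n l0 l1 l2"
  define \<Phi> where "\<Phi> = Phi n k R r \<alpha> \<beta>"
  define S where "S = of_real (R ^ n) + of_real (r ^ n) * \<Phi>"
  assume "\<not> ?K \<le> cmod ?T"
  then have T: "cmod ?T < ?K" by simp
  then have "?K \<noteq> 0" using norm_ge_zero[of ?T] by linarith
  then have nonzero: "E \<noteq> 0" "S \<noteq> 0" "0 < m" using m(2) unfolding E_def S_def \<Phi>_def by auto
  define c where "c = ?T / (E * z ^ n * S)"
  define G where "G = F - smult c (monom 1 n)"
  have "cmod c = cmod ?T / (cmod E * cmod S)"
    unfolding c_def using z by (simp add: norm_divide norm_mult norm_power)
  also have "\<dots> < m / k ^ n"
    using T nonzero k unfolding E_def S_def \<Phi>_def by (simp add: divide_less_eq field_simps)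
  finally have c: "cmod c < m / k ^ n" .
  have outside: "\<forall>w. k \<le> cmod w \<longrightarrow> poly F w \<noteq> 0"
  proof (intro allI impI notI)
    fix w assume "k \<le> cmod w" "poly F w = 0"
    then have "w \<in> sphere 0 k" using zeros by force
    then show False using m(1) nonzero(3) \<open>poly F w = 0\<close> by force
  qed
  note G = perturbation_zeros_in_ball[OF k deg outside m(1) c, folded G_def]
  have "Bop n l0 l1 l2 G (of_real R * z) + \<Phi> * Bop n l0 l1 l2 G (of_real r * z) = ?T - c * (E * z ^ n * S)"
    unfolding G_def Bop_diff_smult Bop_monom E_def S_def \<Phi>_def
    by (simp add: power_mult_distrib algebra_simps)
  also have "\<dots> = 0" unfolding c_def using nonzero z by auto
  finally show False
    using Bop_dilation_combination_nonzero[OF hU n k G(1) G(2) nonzero(1)[unfolded E_def] \<alpha>\<beta> Rr rk z]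
    unfolding \<Phi>_def by simp
qed

theorem corollary2p4:
  fixes n :: nat and k R r :: real and l0 l1 l2 \<alpha> \<beta> :: complex and F :: "complex poly"
  assumes hU: "\<forall>z. Upoly n l0 l1 l2 z = 0 \<longrightarrow> cmod z \<le> cmod (z - of_nat n / 2)"
    and hn: "n \<ge> 1" and hk: "k > 0"
    and hdeg: "degree F = n"
    and hzeros: "\<forall>z. poly F z = 0 \<longrightarrow> cmod z \<le> k"
    and ha: "cmod \<alpha> \<le> 1" and hb: "cmod \<beta> \<le> 1"
    and hRr: "R > r" and hrk: "r \<ge> k"
  shows "(INF z\<in>sphere 0 1.
            cmod (Bop n l0 l1 l2 (F \<circ>\<^sub>p [:0, complex_of_real R:]) z
                  + Phi n k R r \<alpha> \<beta> * Bop n l0 l1 l2 (F \<circ>\<^sub>p [:0, complex_of_real r:]) z))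
         \<ge> cmod (l0 + l1 * of_nat n ^ 2 / 2 + l2 * of_nat n ^ 3 * (of_nat n - 1) / 8) / k ^ n
           * cmod (complex_of_real (R ^ n) + complex_of_real (r ^ n) * Phi n k R r \<alpha> \<beta>)
           * (INF z\<in>sphere 0 k. cmod (poly F z))"
proof -
  define m where "m = (INF z\<in>sphere 0 k. cmod (poly F z))"
  have "bdd_below ((\<lambda>z. cmod (poly F z)) ` sphere 0 k)" by (rule bdd_belowI[of _ 0]) auto
  moreover have "sphere (0::complex) k \<noteq> {}" using hk by (metis empty_iff mem_sphere_0 norm_of_real abs_of_pos)
  ultimately have m: "\<forall>w\<in>sphere 0 k. m \<le> cmod (poly F w)" "0 \<le> m"
    unfolding m_def by (auto intro: cINF_lower cINF_greatest)
  have "sphere (0::complex) 1 \<noteq> {}" by (metis empty_iff mem_sphere_0 norm_one)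
  then show ?thesis
    unfolding m_def[symmetric] Bop_pcompose_dilation Bop_eigenvalue_def[symmetric]
    using Bop_combination_lower_bound[OF hU hn hk hdeg hzeros ha hb hRr hrk m]
    by (intro cINF_greatest) auto
qed

end
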